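(* Let $\Gamma$ and $\mathcal{C}$ be regular conics in the real plane which have a common point of intersection of order higher than $2$ (intersection multiplicity $3$ or $4$). Then there are no closed polygonal lines inscribed in $\Gamma$ and circumscribed about $\mathcal{C}$.
   Context: A regular conic is a smooth curve given by a quadratic equation. A polygonal line $A_1A_2\dots$ is inscribed in $\Gamma$ and circumscribed about $\mathcal{C}$ if all vertices lie on $\Gamma$ and each side line $A_iA_{i+1}$ is tangent to $\mathcal{C}$, consecutive sides through $A_i$ being the two distinct tangent lines from $A_i$ to $\mathcal{C}$; it is closed if its vertex sequence is periodic. *)

theory Defs
  imports "HOL-Analysis.Analysis" "HOL-Library.Landau_Symbols"
begin

type_synonym conic = "real \<times> real \<times> real \<times> real \<times> real \<times> real"
type_synonym point = "real \<times> real"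

fun conic_eval :: "conic \<Rightarrow> point \<Rightarrow> real" where
  "conic_eval (a, b, c, d, e, f) (x, y) =
     a * x^2 + b * x * y + c * y^2 + d * x + e * y + f"

fun conic_grad :: "conic \<Rightarrow> point \<Rightarrow> point" where
  "conic_grad (a, b, c, d, e, f) (x, y) =
     (2 * a * x + b * y + d, b * x + 2 * c * y + e)"

definition conic_points :: "conic \<Rightarrow> point set" where
  "conic_points Q = {p. conic_eval Q p = 0}"

text \<open>Determinant of the symmetric 3x3 matrix of the conic
  [[a, b/2, d/2], [b/2, c, e/2], [d/2, e/2, f]].\<close>
fun conic_det :: "conic \<Rightarrow> real" where
  "conic_det (a, b, c, d, e, f) =
     a * (c * f - e^2 / 4) - (b / 2) * (b * f / 2 - e * d / 4)
     + (d / 2) * (b * e / 4 - c * d / 2)"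

text \<open>Regular conic: nondegenerate quadratic equation whose real zero set is a
  (nonempty, hence smooth) curve: ellipse, parabola or hyperbola.\<close>
definition regular_conic :: "conic \<Rightarrow> bool" where
  "regular_conic Q \<longleftrightarrow> conic_det Q \<noteq> 0 \<and> conic_points Q \<noteq> {}"

definition line_through :: "point \<Rightarrow> point \<Rightarrow> point set" where
  "line_through A B = {A + t *\<^sub>R (B - A) | t. True}"

definition tangent_to :: "point set \<Rightarrow> conic \<Rightarrow> bool" where
  "tangent_to L C \<longleftrightarrow>
     (\<exists>X \<in> conic_points C. \<exists>v. v \<noteq> 0 \<and> conic_grad C X \<bullet> v = 0
        \<and> L = {X + t *\<^sub>R v | t. True})"

definition inscribed_circumscribed :: "conic \<Rightarrow> conic \<Rightarrow> (nat \<Rightarrow> point) \<Rightarrow> bool" where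
  "inscribed_circumscribed \<Gamma> C A \<longleftrightarrow>
     (\<forall>i. A i \<in> conic_points \<Gamma>) \<and>
     (\<forall>i. A i \<noteq> A (Suc i)) \<and>
     (\<forall>i. tangent_to (line_through (A i) (A (Suc i))) C) \<and>
     (\<forall>i. line_through (A i) (A (Suc i)) \<noteq> line_through (A (Suc i)) (A (Suc (Suc i))))"

definition closed_polygonal :: "(nat \<Rightarrow> point) \<Rightarrow> bool" where
  "closed_polygonal A \<longleftrightarrow> (\<exists>n > 0. \<forall>i. A (i + n) = A i)"

text \<open>Intersection multiplicity of C with the smooth conic \<Gamma> at P is at least 3:
  along a regular local parametrisation \<gamma> of \<Gamma> at P, the defining polynomial
  of C vanishes to order at least 3.\<close>
definition intersection_order_ge3 :: "conic \<Rightarrow> conic \<Rightarrow> point \<Rightarrow> bool" where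
  "intersection_order_ge3 \<Gamma> C P \<longleftrightarrow>
     (\<exists>\<gamma> :: real \<Rightarrow> point. \<exists>v. \<gamma> 0 = P \<and> v \<noteq> 0 \<and>
        (\<gamma> has_vector_derivative v) (at 0) \<and>
        eventually (\<lambda>t. \<gamma> t \<in> conic_points \<Gamma>) (at 0) \<and>
        (\<lambda>t. conic_eval C (\<gamma> t)) \<in> O[at 0](\<lambda>t. t ^ 3))"

end

theory Submission
  imports Defs
begin

text \<open>
  Choose affine coordinates (x, y) centred at P, with the x-axis tangent to \<Gamma>, in which
  \<Gamma> is y + a x^2 + b x y + c y^2 = 0 with a \<noteq> 0. Contact of order three forces C, up to a
  factor, into the form y + a x^2 + b' x y + c' y^2 = 0 with the same a: the conics osculate
  at P. Projecting from P, a point (x, y) \<noteq> P of either conic is determined by its slope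
  x / y, and the tangent to C at the point of slope u passes through the point of \<Gamma> of
  slope k iff a (k - u)^2 = \<beta> k + \<gamma>, where \<beta> = b' - b and \<gamma> = c' - c. Along a polygon
  with vertex slopes k_i and touching-point slopes u_i, both k_i, k_(i+1) and
  u_i, u_(i+1) are pairs of roots of such quadratic equations. By Vieta, u_i - k_i grows by
  \<beta> / a at every step, and for \<beta> = 0 the k_i form a nonconstant arithmetic progression;
  either way the polygon cannot close.
\<close>

section \<open>Conics in affine frames\<close>

fun conic_quadratic_part :: "conic \<Rightarrow> point \<Rightarrow> real" where
  "conic_quadratic_part (a, b, c, d, e, f) (x, y) = a * x^2 + b * x * y + c * y^2"

fun conic_polar_form :: "conic \<Rightarrow> point \<Rightarrow> point \<Rightarrow> real" where
  "conic_polar_form (a, b, c, d, e, f) (x, y) (x', y') =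
     2 * a * x * x' + b * (x * y' + y * x') + 2 * c * y * y'"

definition frame_point :: "point \<Rightarrow> point \<Rightarrow> point \<Rightarrow> point \<Rightarrow> point" where
  "frame_point P e1 e2 z = P + fst z *\<^sub>R e1 + snd z *\<^sub>R e2"

definition frame_det :: "point \<Rightarrow> point \<Rightarrow> real" where
  "frame_det u v = fst u * snd v - snd u * fst v"

definition frame_coords :: "point \<Rightarrow> point \<Rightarrow> point \<Rightarrow> point" where
  "frame_coords e1 e2 w =
     ((fst w * snd e2 - snd w * fst e2) / frame_det e1 e2,
      (fst e1 * snd w - snd e1 * fst w) / frame_det e1 e2)"

definition conic_pullback :: "conic \<Rightarrow> point \<Rightarrow> point \<Rightarrow> point \<Rightarrow> conic" where
  "conic_pullback Q P e1 e2 =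
     (conic_quadratic_part Q e1, conic_polar_form Q e1 e2, conic_quadratic_part Q e2,
      conic_grad Q P \<bullet> e1, conic_grad Q P \<bullet> e2, conic_eval Q P)"

lemma conic_eval_pullback:
  "conic_eval (conic_pullback Q P e1 e2) z = conic_eval Q (frame_point P e1 e2 z)"
  by (cases Q; cases P; cases e1; cases e2; cases z)
    (simp add: conic_pullback_def frame_point_def power2_eq_square algebra_simps)

lemma conic_grad_pullback:
  "conic_grad (conic_pullback Q P e1 e2) z \<bullet> (w - z) =
     conic_grad Q (frame_point P e1 e2 z) \<bullet> (frame_point P e1 e2 w - frame_point P e1 e2 z)"
  by (cases Q; cases P; cases e1; cases e2; cases z; cases w)
    (simp add: conic_pullback_def frame_point_def power2_eq_square algebra_simps)

lemma conic_det_pullback: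
  "conic_det (conic_pullback Q P e1 e2) = (frame_det e1 e2)^2 * conic_det Q"
  by (cases Q; cases P; cases e1; cases e2)
    (simp add: conic_pullback_def frame_det_def power2_eq_square field_simps)

lemma frame_point_coords:
  assumes "frame_det e1 e2 \<noteq> 0"
  shows "frame_point P e1 e2 (frame_coords e1 e2 (Z - P)) = Z"
proof -
  obtain x y where xy: "Z - P = (x, y)" by (cases "Z - P")
  obtain a1 a2 where e1: "e1 = (a1, a2)" by (cases e1)
  obtain b1 b2 where e2: "e2 = (b1, b2)" by (cases e2)
  have "fst (frame_coords e1 e2 (Z - P)) *\<^sub>R e1 + snd (frame_coords e1 e2 (Z - P)) *\<^sub>R e2 = Z - P"
    using assms unfolding frame_coords_def xy e1 e2
    by (simp add: field_simps) (simp add: frame_det_def algebra_simps)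
  then show ?thesis by (simp add: frame_point_def algebra_simps)
qed

lemma frame_coords_inj:
  assumes "frame_det e1 e2 \<noteq> 0"
  shows "frame_coords e1 e2 (Z - P) = frame_coords e1 e2 (Z' - P) \<longleftrightarrow> Z = Z'"
  using frame_point_coords[OF assms, of P Z] frame_point_coords[OF assms, of P Z'] by metis

lemma bounded_linear_frame_coords: "bounded_linear (frame_coords e1 e2)"
  unfolding linear_conv_bounded_linear[symmetric]
  by (rule linearI) (auto simp: frame_coords_def add_divide_distrib diff_divide_distrib algebra_simps)

lemma conic_eval_pullback_frame_coords:
  assumes "frame_det e1 e2 \<noteq> 0"
  shows "conic_eval (conic_pullback Q P e1 e2) (frame_coords e1 e2 (Z - P)) = conic_eval Q Z"
  using conic_eval_pullback[of Q P e1 e2] frame_point_coords[OF assms] by simp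

lemma conic_grad_pullback_frame_coords:
  assumes "frame_det e1 e2 \<noteq> 0"
  shows "conic_grad (conic_pullback Q P e1 e2) (frame_coords e1 e2 (X - P))
      \<bullet> (frame_coords e1 e2 (Z - P) - frame_coords e1 e2 (X - P)) = conic_grad Q X \<bullet> (Z - X)"
  using conic_grad_pullback[of Q P e1 e2] frame_point_coords[OF assms] by simp

lemma adapted_frame_exists:
  fixes g :: point
  assumes "g \<noteq> 0"
  obtains e1 e2 where "g \<bullet> e1 = 0" "g \<bullet> e2 = 1" "frame_det e1 e2 \<noteq> 0"
proof -
  obtain g1 g2 where g: "g = (g1, g2)" by (cases g)
  have "g \<bullet> g \<noteq> 0" using assms by simp
  show ?thesis
  proof (rule that)
    show "g \<bullet> (- g2, g1) = 0" by (simp add: g)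
    show "g \<bullet> ((1 / (g \<bullet> g)) *\<^sub>R g) = 1"
      using \<open>g \<bullet> g \<noteq> 0\<close> by simp
    have "frame_det (- g2, g1) ((1 / (g \<bullet> g)) *\<^sub>R g) = - (g \<bullet> g) / (g \<bullet> g)"
      by (simp add: g frame_det_def diff_divide_distrib add_divide_distrib)
    then show "frame_det (- g2, g1) ((1 / (g \<bullet> g)) *\<^sub>R g) \<noteq> 0"
      using \<open>g \<bullet> g \<noteq> 0\<close> by simp
  qed
qed

lemma conic_grad_nonzero:
  assumes "conic_det Q \<noteq> 0" "conic_eval Q X = 0"
  shows "conic_grad Q X \<noteq> 0"
proof
  assume grad: "conic_grad Q X = 0"
  obtain a b c d e f where Q: "Q = (a, b, c, d, e, f)" by (cases Q) auto
  obtain x y where X: "X = (x, y)" by (cases X)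
  have d: "d = - 2 * a * x - b * y" and e: "e = - b * x - 2 * c * y"
    using grad by (auto simp: Q X zero_prod_def)
  have f: "f = - (d * x + e * y) / 2"
    using assms(2) unfolding Q X d e by (simp add: power2_eq_square algebra_simps)
  have "conic_det Q = 0"
    unfolding Q f unfolding d e by (simp add: power2_eq_square field_simps)
  with assms(1) show False by simp
qed

lemma conic_det_normal_form: "conic_det (a, b, c, 0, f, 0) = - a * f^2 / 4"
  by (simp add: power2_eq_square)

lemma conic_eval_normal_form_scale:
  "conic_eval (F * a, F * b, F * c, 0, F, 0) z = F * conic_eval (a, b, c, 0, 1, 0) z"
  by (cases z) (simp add: algebra_simps)

lemma conic_grad_normal_form_scale:
  "conic_grad (F * a, F * b, F * c, 0, F, 0) z = F *\<^sub>R conic_grad (a, b, c, 0, 1, 0) z"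
  by (cases z) (simp add: algebra_simps)

section \<open>Contact of order three\<close>

lemma bigo_power_divide_tendsto_0:
  fixes f :: "real \<Rightarrow> real"
  assumes "f \<in> O[at 0](\<lambda>t. t ^ n)" "k < n"
  shows "((\<lambda>t. f t / t ^ k) \<longlongrightarrow> 0) (at 0)"
proof -
  obtain C where bound: "eventually (\<lambda>t. norm (f t) \<le> C * norm (t ^ n)) (at 0)"
    using assms(1) by (elim landau_o.bigE)
  have "eventually (\<lambda>t. norm (f t / t ^ k) \<le> C * \<bar>t\<bar> ^ (n - k)) (at 0)"
    using bound eventually_neq_at_within[of 0 0 UNIV]
  proof eventually_elim
    case (elim t)
    have "\<bar>t\<bar> ^ n = \<bar>t\<bar> ^ (n - k) * \<bar>t\<bar> ^ k"
      using assms(2) by (simp flip: power_add)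
    with elim show ?case by (simp add: abs_divide power_abs divide_le_eq mult.assoc)
  qed
  moreover have "((\<lambda>t. C * \<bar>t\<bar> ^ (n - k)) \<longlongrightarrow> 0) (at (0::real))"
    using assms(2) by (auto intro!: tendsto_eq_intros)
  ultimately show ?thesis by (rule Lim_null_comparison)
qed

lemma curve_on_normal_conic_asymptotics:
  fixes X Y :: "real \<Rightarrow> real"
  assumes "X 0 = 0" "Y 0 = 0"
    and "(X has_real_derivative V1) (at 0)" "(Y has_real_derivative V2) (at 0)"
    and on_conic: "eventually (\<lambda>t. conic_eval (a, b, c, 0, 1, 0) (X t, Y t) = 0) (at 0)"
  shows "V2 = 0" "((\<lambda>t. Y t / t^2) \<longlongrightarrow> - a * V1^2) (at 0)"
proof -
  have X_quot: "((\<lambda>t. X t / t) \<longlongrightarrow> V1) (at 0)" and Y_quot: "((\<lambda>t. Y t / t) \<longlongrightarrow> V2) (at 0)"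
    using assms(1-4) by (simp_all add: has_field_derivative_iff)
  define W where "W t = 1 + b * X t + c * Y t" for t
  have "(X \<longlongrightarrow> 0) (at 0)" "(Y \<longlongrightarrow> 0) (at 0)"
    using DERIV_isCont[OF assms(3)] DERIV_isCont[OF assms(4)] assms(1,2)
    by (simp_all add: isCont_def)
  then have W_lim: "(W \<longlongrightarrow> 1) (at 0)"
    unfolding W_def by (auto intro!: tendsto_eq_intros)
  then have "eventually (\<lambda>t. W t \<noteq> 0) (at 0)"
    by (rule tendsto_imp_eventually_ne) simp
  then have "eventually (\<lambda>t. Y t / t = - a * X t * (X t / t) / W t
      \<and> Y t / t^2 = - a * (X t / t)^2 / W t) (at 0)"
    using on_conic eventually_neq_at_within[of 0 0 UNIV]
  proof eventually_elim
    case (elim t)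
    then have "Y t * W t = - a * X t ^ 2"
      by (simp add: W_def algebra_simps power2_eq_square)
    with elim show ?case by (simp add: field_simps power2_eq_square)
  qed
  then have quot: "eventually (\<lambda>t. Y t / t = - a * X t * (X t / t) / W t) (at 0)"
    and curv: "eventually (\<lambda>t. Y t / t^2 = - a * (X t / t)^2 / W t) (at 0)"
    unfolding eventually_conj_iff by blast+
  have "((\<lambda>t. Y t / t) \<longlongrightarrow> - a * 0 * V1 / 1) (at 0)"
    unfolding tendsto_cong[OF quot] using \<open>(X \<longlongrightarrow> 0) (at 0)\<close> X_quot W_lim
    by (intro tendsto_intros) simp_all
  moreover have "((\<lambda>t. Y t / t^2) \<longlongrightarrow> - a * V1^2 / 1) (at 0)"
    unfolding tendsto_cong[OF curv] using X_quot W_lim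
    by (intro tendsto_intros) simp_all
  ultimately show "V2 = 0" "((\<lambda>t. Y t / t^2) \<longlongrightarrow> - a * V1^2) (at 0)"
    using Y_quot tendsto_unique[OF at_neq_bot] by fastforce+
qed

lemma has_vector_derivative_components:
  fixes z :: "real \<Rightarrow> point"
  assumes "(z has_vector_derivative V) F"
  shows "((\<lambda>t. fst (z t)) has_real_derivative fst V) F"
    and "((\<lambda>t. snd (z t)) has_real_derivative snd V) F"
  using has_derivative_fst[OF assms[unfolded has_vector_derivative_def]]
    has_derivative_snd[OF assms[unfolded has_vector_derivative_def]]
  unfolding has_real_derivative_iff_has_vector_derivative has_vector_derivative_def
  by simp_all

lemma normal_conic_contact_order_3:
  fixes z :: "real \<Rightarrow> point"
  assumes "z 0 = 0" "(z has_vector_derivative V) (at 0)" "V \<noteq> 0"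
    and on_conic: "eventually (\<lambda>t. conic_eval (a, b, c, 0, 1, 0) (z t) = 0) (at 0)"
    and contact: "(\<lambda>t. conic_eval (A, B, D, E, F, 0) (z t)) \<in> O[at 0](\<lambda>t. t ^ 3)"
  shows "E = 0" "A = a * F"
proof -
  define X where "X t = fst (z t)" for t
  define Y where "Y t = snd (z t)" for t
  have dX: "(X has_real_derivative fst V) (at 0)" and dY: "(Y has_real_derivative snd V) (at 0)"
    unfolding X_def Y_def using has_vector_derivative_components[OF assms(2)] by simp_all
  have "eventually (\<lambda>t. conic_eval (a, b, c, 0, 1, 0) (X t, Y t) = 0) (at 0)"
    using on_conic by (simp add: X_def Y_def)
  from curve_on_normal_conic_asymptotics[OF _ _ dX dY this]
  have "snd V = 0" and Y_curv: "((\<lambda>t. Y t / t^2) \<longlongrightarrow> - a * fst V ^ 2) (at 0)"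
    using assms(1) by (simp_all add: X_def Y_def)
  with assms(3) have "fst V \<noteq> 0" by (simp add: prod_eq_iff)
  have X_quot: "((\<lambda>t. X t / t) \<longlongrightarrow> fst V) (at 0)" and Y_quot: "((\<lambda>t. Y t / t) \<longlongrightarrow> 0) (at 0)"
    using dX dY assms(1) \<open>snd V = 0\<close> by (simp_all add: has_field_derivative_iff X_def Y_def)
  have X_lim: "(X \<longlongrightarrow> 0) (at 0)" and Y_lim: "(Y \<longlongrightarrow> 0) (at 0)"
    using DERIV_isCont[OF dX] DERIV_isCont[OF dY] assms(1)
    by (simp_all add: isCont_def X_def Y_def)
  define g where "g t = conic_eval (A, B, D, E, F, 0) (X t, Y t)" for t
  have g_small: "((\<lambda>t. g t / t ^ k) \<longlongrightarrow> 0) (at 0)" if "k < 3" for k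
    using bigo_power_divide_tendsto_0[OF contact that] by (simp add: g_def X_def Y_def)
  have "eventually (\<lambda>t. g t / t = E * (X t / t) + F * (Y t / t)
      + (A * X t + B * Y t) * (X t / t) + D * Y t * (Y t / t)) (at 0)"
    using eventually_neq_at_within[of 0 0 UNIV]
    by eventually_elim (simp add: g_def field_simps power2_eq_square)
  moreover have "((\<lambda>t. E * (X t / t) + F * (Y t / t) + (A * X t + B * Y t) * (X t / t)
      + D * Y t * (Y t / t)) \<longlongrightarrow> E * fst V + F * 0 + (A * 0 + B * 0) * fst V + D * 0 * 0) (at 0)"
    using X_quot Y_quot X_lim Y_lim by (intro tendsto_intros)
  ultimately have "((\<lambda>t. g t / t) \<longlongrightarrow> E * fst V) (at 0)"
    by (simp add: tendsto_cong)
  with g_small[of 1] have "E * fst V = 0" using tendsto_unique[OF at_neq_bot] by fastforce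
  with \<open>fst V \<noteq> 0\<close> show "E = 0" by simp
  have "eventually (\<lambda>t. g t / t^2 = F * (Y t / t^2) + A * (X t / t)^2
      + B * (X t / t) * (Y t / t) + D * (Y t / t)^2) (at 0)"
    using eventually_neq_at_within[of 0 0 UNIV]
    by eventually_elim (simp add: g_def \<open>E = 0\<close> field_simps power2_eq_square)
  moreover have "((\<lambda>t. F * (Y t / t^2) + A * (X t / t)^2 + B * (X t / t) * (Y t / t)
      + D * (Y t / t)^2) \<longlongrightarrow> F * (- a * fst V ^ 2) + A * fst V ^ 2 + B * fst V * 0 + D * 0^2) (at 0)"
    using X_quot Y_quot Y_curv by (intro tendsto_intros)
  ultimately have "((\<lambda>t. g t / t^2) \<longlongrightarrow> (A - a * F) * fst V ^ 2) (at 0)"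
    by (simp add: tendsto_cong algebra_simps)
  with g_small[of 2] have "(A - a * F) * fst V ^ 2 = 0" using tendsto_unique[OF at_neq_bot] by fastforce
  with \<open>fst V \<noteq> 0\<close> show "A = a * F" by simp
qed

lemma intersection_order_ge3_in_frame:
  assumes "intersection_order_ge3 \<Gamma> C P" "frame_det e1 e2 \<noteq> 0"
  obtains z :: "real \<Rightarrow> point" and V where "z 0 = 0" "(z has_vector_derivative V) (at 0)" "V \<noteq> 0"
    "eventually (\<lambda>t. conic_eval (conic_pullback \<Gamma> P e1 e2) (z t) = 0) (at 0)"
    "(\<lambda>t. conic_eval (conic_pullback C P e1 e2) (z t)) \<in> O[at 0](\<lambda>t. t ^ 3)"
proof -
  obtain \<gamma> v where "\<gamma> 0 = P" "v \<noteq> 0" "(\<gamma> has_vector_derivative v) (at 0)"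
    and on_\<Gamma>: "eventually (\<lambda>t. \<gamma> t \<in> conic_points \<Gamma>) (at 0)"
    and contact: "(\<lambda>t. conic_eval C (\<gamma> t)) \<in> O[at 0](\<lambda>t. t ^ 3)"
    using assms(1) unfolding intersection_order_ge3_def by blast
  define z where "z t = frame_coords e1 e2 (\<gamma> t - P)" for t
  have "z 0 = 0"
    using \<open>\<gamma> 0 = P\<close> by (simp add: z_def frame_coords_def zero_prod_def)
  have "((\<lambda>t. \<gamma> t - P) has_vector_derivative v) (at 0)"
    using \<open>(\<gamma> has_vector_derivative v) (at 0)\<close> by (auto intro!: derivative_eq_intros)
  then have "(z has_vector_derivative frame_coords e1 e2 v) (at 0)"
    unfolding z_def[abs_def] by (rule bounded_linear.has_vector_derivative[OF bounded_linear_frame_coords])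
  moreover have "frame_coords e1 e2 v \<noteq> 0"
    using frame_point_coords[OF assms(2), of "0" v] \<open>v \<noteq> 0\<close> by (auto simp: frame_point_def)
  moreover have "eventually (\<lambda>t. conic_eval (conic_pullback \<Gamma> P e1 e2) (z t) = 0) (at 0)"
    using on_\<Gamma> by eventually_elim
      (simp add: z_def conic_points_def conic_eval_pullback_frame_coords[OF assms(2)])
  moreover have "(\<lambda>t. conic_eval (conic_pullback C P e1 e2) (z t)) \<in> O[at 0](\<lambda>t. t ^ 3)"
    using contact by (simp add: z_def conic_eval_pullback_frame_coords[OF assms(2)])
  ultimately show ?thesis using that \<open>z 0 = 0\<close> by blast
qed

lemma osculating_normal_form:
  assumes "regular_conic \<Gamma>" "regular_conic C"
    and "P \<in> conic_points \<Gamma>" "P \<in> conic_points C" "intersection_order_ge3 \<Gamma> C P"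
  obtains e1 e2 a b c b' c' F where "frame_det e1 e2 \<noteq> 0" "a \<noteq> 0" "F \<noteq> 0"
    "conic_pullback \<Gamma> P e1 e2 = (a, b, c, 0, 1, 0)"
    "conic_pullback C P e1 e2 = (F * a, F * b', F * c', 0, F, 0)"
proof -
  have det: "conic_det \<Gamma> \<noteq> 0" "conic_det C \<noteq> 0"
    using assms(1,2) by (simp_all add: regular_conic_def)
  have "conic_grad \<Gamma> P \<noteq> 0"
    using conic_grad_nonzero det(1) assms(3) by (simp add: conic_points_def)
  then obtain e1 e2 where frame: "conic_grad \<Gamma> P \<bullet> e1 = 0" "conic_grad \<Gamma> P \<bullet> e2 = 1"
    "frame_det e1 e2 \<noteq> 0"
    by (rule adapted_frame_exists)
  obtain a b c where \<Gamma>_frame: "conic_pullback \<Gamma> P e1 e2 = (a, b, c, 0, 1, 0)"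
    using frame assms(3) by (simp add: conic_pullback_def conic_points_def)
  obtain A B D E F where C_frame: "conic_pullback C P e1 e2 = (A, B, D, E, F, 0)"
    using assms(4) by (simp add: conic_pullback_def conic_points_def)
  have "a \<noteq> 0"
    using conic_det_pullback[of \<Gamma> P e1 e2] frame(3) det(1)
    by (auto simp: \<Gamma>_frame conic_det_normal_form)
  obtain z :: "real \<Rightarrow> point" and V where curve: "z 0 = 0" "(z has_vector_derivative V) (at 0)" "V \<noteq> 0"
    "eventually (\<lambda>t. conic_eval (a, b, c, 0, 1, 0) (z t) = 0) (at 0)"
    "(\<lambda>t. conic_eval (A, B, D, E, F, 0) (z t)) \<in> O[at 0](\<lambda>t. t ^ 3)"
    by (rule intersection_order_ge3_in_frame[OF assms(5) frame(3), unfolded \<Gamma>_frame C_frame])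
  have "E = 0" "A = a * F"
    using normal_conic_contact_order_3[OF curve] by simp_all
  have "F \<noteq> 0"
    using conic_det_pullback[of C P e1 e2] frame(3) det(2)
    by (auto simp: C_frame \<open>E = 0\<close> conic_det_normal_form)
  have "conic_pullback C P e1 e2 = (F * a, F * (B / F), F * (D / F), 0, F, 0)"
    using \<open>F \<noteq> 0\<close> by (simp add: C_frame \<open>E = 0\<close> \<open>A = a * F\<close>)
  with frame(3) \<open>a \<noteq> 0\<close> \<open>F \<noteq> 0\<close> \<Gamma>_frame show ?thesis by (rule that)
qed

section \<open>Touching points of the sides\<close>

lemma lines_with_common_normal_eq:
  fixes g v w X :: point
  assumes "g \<noteq> 0" "g \<bullet> v = 0" "g \<bullet> w = 0" "v \<noteq> 0" "w \<noteq> 0"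
  shows "{X + t *\<^sub>R v | t. True} = {X + t *\<^sub>R w | t. True}"
proof -
  obtain g1 g2 where g: "g = (g1, g2)" by (cases g)
  obtain v1 v2 where v: "v = (v1, v2)" by (cases v)
  obtain w1 w2 where w: "w = (w1, w2)" by (cases w)
  have "\<exists>l. l \<noteq> 0 \<and> w = l *\<^sub>R v"
  proof (cases "g1 = 0")
    case True
    then have "g2 \<noteq> 0" using assms(1) g by (auto simp: zero_prod_def)
    then have "v2 = 0" "w2 = 0" using assms(2,3) True g v w by auto
    then have "v1 \<noteq> 0" "w1 \<noteq> 0" using assms(4,5) v w by (auto simp: zero_prod_def)
    then show ?thesis using \<open>v2 = 0\<close> \<open>w2 = 0\<close> v w by (intro exI[of _ "w1 / v1"]) auto
  next
    case False
    have v1: "v1 = - g2 * v2 / g1" and w1: "w1 = - g2 * w2 / g1"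
      using assms(2,3) False g v w by (auto simp: field_simps)
    then have "v2 \<noteq> 0" "w2 \<noteq> 0" using assms(4,5) v w by (auto simp: zero_prod_def)
    then show ?thesis using v1 w1 v w by (intro exI[of _ "w2 / v2"]) (auto simp: field_simps)
  qed
  then obtain l where "l \<noteq> 0" "w = l *\<^sub>R v" by blast
  then have "X + t *\<^sub>R v = X + (t / l) *\<^sub>R w" "X + t *\<^sub>R w = X + (t * l) *\<^sub>R v" for t
    by simp_all
  then show ?thesis by blast
qed

lemma inscribed_circumscribed_side_tangents:
  assumes "inscribed_circumscribed \<Gamma> C A"
  obtains X W where "\<And>i. X i \<in> conic_points C" "\<And>i. W i \<noteq> 0"
    "\<And>i. conic_grad C (X i) \<bullet> W i = 0"
    "\<And>i. line_through (A i) (A (Suc i)) = {X i + t *\<^sub>R W i | t. True}"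
proof -
  have "tangent_to (line_through (A i) (A (Suc i))) C" for i
    using assms by (simp add: inscribed_circumscribed_def)
  then have "\<forall>i. \<exists>XW. fst XW \<in> conic_points C \<and> snd XW \<noteq> 0 \<and> conic_grad C (fst XW) \<bullet> snd XW = 0
      \<and> line_through (A i) (A (Suc i)) = {fst XW + t *\<^sub>R snd XW | t. True}"
    unfolding tangent_to_def by fastforce
  from choice[OF this] obtain XW where "\<forall>i. fst (XW i) \<in> conic_points C \<and> snd (XW i) \<noteq> 0
      \<and> conic_grad C (fst (XW i)) \<bullet> snd (XW i) = 0
      \<and> line_through (A i) (A (Suc i)) = {fst (XW i) + t *\<^sub>R snd (XW i) | t. True}"
    by blast
  then show ?thesis
    using that[of "\<lambda>i. fst (XW i)" "\<lambda>i. snd (XW i)"] by blast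
qed

lemma inscribed_circumscribed_touching_points:
  assumes "inscribed_circumscribed \<Gamma> C A" "conic_det C \<noteq> 0"
  obtains X where "\<And>i. X i \<in> conic_points C"
    "\<And>i. conic_grad C (X i) \<bullet> (A i - X i) = 0"
    "\<And>i. conic_grad C (X i) \<bullet> (A (Suc i) - X i) = 0"
    "\<And>i. X i \<noteq> X (Suc i)"
proof -
  obtain X W where on_C: "\<And>i. X i \<in> conic_points C" and "\<And>i. W i \<noteq> 0"
    and W_tangent: "\<And>i. conic_grad C (X i) \<bullet> W i = 0"
    and side: "\<And>i. line_through (A i) (A (Suc i)) = {X i + t *\<^sub>R W i | t. True}"
    using inscribed_circumscribed_side_tangents[OF assms(1)] by blast
  have touch: "conic_grad C (X i) \<bullet> (A i - X i) = 0 \<and> conic_grad C (X i) \<bullet> (A (Suc i) - X i) = 0"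
    for i
  proof -
    have "A i = A i + 0 *\<^sub>R (A (Suc i) - A i)" "A (Suc i) = A i + 1 *\<^sub>R (A (Suc i) - A i)"
      by simp_all
    then have "A i \<in> line_through (A i) (A (Suc i))" "A (Suc i) \<in> line_through (A i) (A (Suc i))"
      unfolding line_through_def by blast+
    then obtain t1 t2 where "A i = X i + t1 *\<^sub>R W i" "A (Suc i) = X i + t2 *\<^sub>R W i"
      unfolding side by blast
    then show ?thesis using W_tangent[of i] by simp
  qed
  moreover have "X i \<noteq> X (Suc i)" for i
  proof
    assume same: "X i = X (Suc i)"
    have "conic_grad C (X i) \<noteq> 0"
      using conic_grad_nonzero[OF assms(2)] on_C by (simp add: conic_points_def)
    then have "{X i + t *\<^sub>R W i | t. True} = {X i + t *\<^sub>R W (Suc i) | t. True}"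
      using W_tangent[of "Suc i"] \<open>W i \<noteq> 0\<close> \<open>W (Suc i) \<noteq> 0\<close>
      by (intro lines_with_common_normal_eq[OF _ W_tangent[of i]]) (simp_all add: same)
    moreover have "line_through (A i) (A (Suc i)) \<noteq> line_through (A (Suc i)) (A (Suc (Suc i)))"
      using assms(1) by (simp add: inscribed_circumscribed_def)
    ultimately show False
      unfolding side same by simp
  qed
  ultimately show ?thesis using that on_C by blast
qed

section \<open>Polygons for osculating conics\<close>

lemma slope_chain_step:
  fixes k u :: "nat \<Rightarrow> real"
  assumes "a \<noteq> 0"
    and touch: "\<And>i. a * (k i - u i)^2 = \<beta> * k i + \<gamma>"
    and touch_next: "\<And>i. a * (k (Suc i) - u i)^2 = \<beta> * k (Suc i) + \<gamma>"
    and "k i \<noteq> k (Suc i)" "u i \<noteq> u (Suc i)"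
  shows "a * (k i + k (Suc i) - 2 * u i) = \<beta>"
    and "u (Suc i) - k (Suc i) = u i - k i + \<beta> / a"
proof -
  \<comment> \<open>Vieta: k i, k (Suc i) are roots of a (k - u i)^2 = \<beta> k + \<gamma>, and
    u i, u (Suc i) are roots of a (k (Suc i) - u)^2 = \<beta> k (Suc i) + \<gamma>.\<close>
  have "(k i - k (Suc i)) * (a * (k i + k (Suc i) - 2 * u i)) = (k i - k (Suc i)) * \<beta>"
    using touch[of i] touch_next[of i] by (simp add: algebra_simps power2_eq_square)
  then show sum_k: "a * (k i + k (Suc i) - 2 * u i) = \<beta>"
    using \<open>k i \<noteq> k (Suc i)\<close> by simp
  have "a * ((u (Suc i) - u i) * (u (Suc i) + u i - 2 * k (Suc i))) = 0"
    using touch[of "Suc i"] touch_next[of i] by (simp add: algebra_simps power2_eq_square)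
  then have u_next: "u (Suc i) = 2 * k (Suc i) - u i"
    using \<open>a \<noteq> 0\<close> \<open>u i \<noteq> u (Suc i)\<close> by simp
  have "a * (u (Suc i) - k (Suc i)) = a * (u i - k i) + \<beta>"
    unfolding u_next using sum_k by (simp add: algebra_simps)
  then show "u (Suc i) - k (Suc i) = u i - k i + \<beta> / a"
    using \<open>a \<noteq> 0\<close> by (simp add: field_simps)
qed

lemma slope_chain_not_periodic:
  fixes k u :: "nat \<Rightarrow> real"
  assumes "a \<noteq> 0"
    and "\<And>i. a * (k i - u i)^2 = \<beta> * k i + \<gamma>"
    and "\<And>i. a * (k (Suc i) - u i)^2 = \<beta> * k (Suc i) + \<gamma>"
    and "\<And>i. k i \<noteq> k (Suc i)" "\<And>i. u i \<noteq> u (Suc i)"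
    and "m > 0" and periodic: "\<And>i. k (i + m) = k i"
  shows False
proof -
  have step: "a * (k i + k (Suc i) - 2 * u i) = \<beta>" "u (Suc i) - k (Suc i) = u i - k i + \<beta> / a"
    for i
    using slope_chain_step[of a k u \<beta> \<gamma> i, OF assms(1-3) assms(4,5)[of i]] by simp_all
  have gap: "u i - k i = u 0 - k 0 + real i * (\<beta> / a)" for i
  proof (induction i)
    case (Suc i)
    then show ?case
      using step(2)[of i] by (simp only: of_nat_Suc distrib_right)
  qed simp
  have "u i = (k i + k (Suc i)) / 2 - \<beta> / (2 * a)" for i
    using step(1)[of i] \<open>a \<noteq> 0\<close> by (simp add: field_simps)
  then have "u m = u 0"
    using periodic[of 0] periodic[of 1] by simp
  then have "real m * (\<beta> / a) = 0"
    using gap[of m] periodic[of 0] by simp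
  with \<open>m > 0\<close> \<open>a \<noteq> 0\<close> have "\<beta> = 0" by simp
  then have arith_prog: "k i = k 0 + real i * (2 * (u 0 - k 0))" for i
  proof (induction i)
    case (Suc i)
    have "k (Suc i) = k i + 2 * (u i - k i)"
      using step(1)[of i] \<open>\<beta> = 0\<close> \<open>a \<noteq> 0\<close> by simp
    then show ?case using Suc gap[of i] \<open>\<beta> = 0\<close> by (simp add: algebra_simps)
  qed simp
  have "u 0 = k 0"
    using arith_prog[of m] \<open>m > 0\<close> periodic[of 0] by simp
  then have "k 1 = k 0" using arith_prog[of 1] by simp
  with \<open>\<And>i. k i \<noteq> k (Suc i)\<close>[of 0] show False by simp
qed

lemma normal_conic_point_on_axis:
  assumes "a \<noteq> 0" "conic_eval (a, b, c, 0, 1, 0) z = 0" "snd z = 0"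
  shows "z = 0"
  using assms by (cases z) (simp add: zero_prod_def)

lemma normal_conic_tangent_through_origin:
  assumes "conic_eval (a, b, c, 0, 1, 0) w = 0"
  shows "conic_grad (a, b, c, 0, 1, 0) w \<bullet> (0 - w) = snd w"
proof -
  have "conic_grad (a, b, c, 0, 1, 0) w \<bullet> (0 - w) = snd w - 2 * conic_eval (a, b, c, 0, 1, 0) w"
    by (cases w) (simp add: power2_eq_square algebra_simps)
  with assms show ?thesis by simp
qed

lemma normal_conic_slope_inj:
  assumes "conic_eval (a, b, c, 0, 1, 0) z = 0" "conic_eval (a, b, c, 0, 1, 0) w = 0"
    and "snd z \<noteq> 0" "snd w \<noteq> 0" "fst z / snd z = fst w / snd w"
  shows "z = w"
proof -
  obtain x y x' y' where z: "z = (x, y)" and w: "w = (x', y')" by (cases z, cases w)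
  define s where "s = x / y"
  have s': "s = x' / y'" using assms(5) by (simp add: z w s_def)
  have "y \<noteq> 0" "y' \<noteq> 0" using assms(3,4) by (simp_all add: z w)
  have x: "x = s * y" using \<open>y \<noteq> 0\<close> by (simp add: s_def)
  have x': "x' = s * y'" using \<open>y' \<noteq> 0\<close> by (simp add: s')
  have "y * (1 + (a * s^2 + b * s + c) * y) = 0" "y' * (1 + (a * s^2 + b * s + c) * y') = 0"
    using assms(1,2) unfolding z w x x' by (simp_all add: algebra_simps power2_eq_square)
  then have y: "1 + (a * s^2 + b * s + c) * y = 0" and "1 + (a * s^2 + b * s + c) * y' = 0"
    using \<open>y \<noteq> 0\<close> \<open>y' \<noteq> 0\<close> by simp_all
  then have "(a * s^2 + b * s + c) * (y - y') = 0" by (simp add: algebra_simps)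
  moreover have "a * s^2 + b * s + c \<noteq> 0" using y by auto
  ultimately have "y = y'" by simp
  then show ?thesis by (simp add: z w x x')
qed

lemma normal_conic_tangency_slopes:
  assumes z: "conic_eval (a, b, c, 0, 1, 0) z = 0" and w: "conic_eval (a, b', c', 0, 1, 0) w = 0"
    and "snd z \<noteq> 0" "snd w \<noteq> 0"
  shows "conic_grad (a, b', c', 0, 1, 0) w \<bullet> (z - w) =
    snd w * snd z * ((b' - b) * (fst z / snd z) + (c' - c) - a * (fst z / snd z - fst w / snd w)^2)"
proof -
  obtain x1 y1 x0 y0 where zw: "z = (x1, y1)" "w = (x0, y0)" by (cases z, cases w)
  have "y0 \<noteq> 0" "y1 \<noteq> 0" using assms(3,4) by (simp_all add: zw)
  have h1: "a * x1^2 = - y1 - b * x1 * y1 - c * y1^2" using z by (simp add: zw)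
  have h0: "a * x0^2 = - y0 - b' * x0 * y0 - c' * y0^2" using w by (simp add: zw)
  have "y0 * y1 * ((b' - b) * (x1 / y1) + (c' - c) - a * (x1 / y1 - x0 / y0)^2)
      = (b' - b) * x1 * y0 + (c' - c) * y0 * y1 - (a * x1^2) * y0 / y1 + 2 * a * x1 * x0
        - (a * x0^2) * y1 / y0"
    using \<open>y0 \<noteq> 0\<close> \<open>y1 \<noteq> 0\<close> by (simp add: field_simps power2_eq_square)
  also have "\<dots> = (b' - b) * x1 * y0 + (c' - c) * y0 * y1 + (y0 + b * x1 * y0 + c * y0 * y1)
      + 2 * a * x1 * x0 + (y1 + b' * x0 * y1 + c' * y0 * y1)"
    unfolding h1 h0 using \<open>y0 \<noteq> 0\<close> \<open>y1 \<noteq> 0\<close> by (simp add: field_simps power2_eq_square)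
  also have "\<dots> = conic_grad (a, b', c', 0, 1, 0) w \<bullet> (z - w)"
    using h0 by (simp add: zw algebra_simps power2_eq_square)
  finally show ?thesis by (simp add: zw)
qed

lemma normal_form_side_avoids_origin:
  assumes "a \<noteq> 0"
    and "conic_eval (a, b, c, 0, 1, 0) z = 0" "conic_eval (a, b, c, 0, 1, 0) z' = 0" "z \<noteq> z'"
    and on_C: "conic_eval (a, b', c', 0, 1, 0) w = 0"
    and touch: "conic_grad (a, b', c', 0, 1, 0) w \<bullet> (z - w) = 0"
      "conic_grad (a, b', c', 0, 1, 0) w \<bullet> (z' - w) = 0"
  shows "snd w \<noteq> 0" "snd z \<noteq> 0"
proof -
  show "snd w \<noteq> 0"
  proof
    assume "snd w = 0"
    then have "w = 0" using normal_conic_point_on_axis \<open>a \<noteq> 0\<close> on_C by blast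
    then have "snd z = 0" "snd z' = 0"
      using touch by (simp_all add: zero_prod_def inner_prod_def)
    then have "z = 0" "z' = 0"
      using normal_conic_point_on_axis assms(1-3) by blast+
    with \<open>z \<noteq> z'\<close> show False by simp
  qed
  show "snd z \<noteq> 0"
  proof
    assume "snd z = 0"
    then have "z = 0" using normal_conic_point_on_axis assms(1,2) by blast
    then show False
      using touch(1) normal_conic_tangent_through_origin[OF on_C] \<open>snd w \<noteq> 0\<close> by simp
  qed
qed

lemma no_closed_polygon_osculating_normal_form:
  fixes p q :: "nat \<Rightarrow> point"
  assumes "a \<noteq> 0"
    and on_\<Gamma>: "\<And>i. conic_eval (a, b, c, 0, 1, 0) (p i) = 0"
    and on_C: "\<And>i. conic_eval (a, b', c', 0, 1, 0) (q i) = 0"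
    and touch: "\<And>i. conic_grad (a, b', c', 0, 1, 0) (q i) \<bullet> (p i - q i) = 0"
    and touch_next: "\<And>i. conic_grad (a, b', c', 0, 1, 0) (q i) \<bullet> (p (Suc i) - q i) = 0"
    and "\<And>i. p i \<noteq> p (Suc i)" "\<And>i. q i \<noteq> q (Suc i)"
    and "m > 0" "\<And>i. p (i + m) = p i"
  shows False
proof -
  have q_off_axis: "snd (q i) \<noteq> 0" and p_off_axis: "snd (p i) \<noteq> 0" for i
    using normal_form_side_avoids_origin[OF \<open>a \<noteq> 0\<close> on_\<Gamma> on_\<Gamma> \<open>p i \<noteq> p (Suc i)\<close> on_C
        touch touch_next]
    by blast+
  define k where "k i = fst (p i) / snd (p i)" for i
  define u where "u i = fst (q i) / snd (q i)" for i
  have "a * (k i - u i)^2 = (b' - b) * k i + (c' - c)" for i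
    using normal_conic_tangency_slopes[OF on_\<Gamma>[of i] on_C[of i] p_off_axis[of i] q_off_axis[of i]]
      touch[of i] p_off_axis[of i] q_off_axis[of i]
    by (simp add: k_def u_def)
  moreover have "a * (k (Suc i) - u i)^2 = (b' - b) * k (Suc i) + (c' - c)" for i
    using normal_conic_tangency_slopes[OF on_\<Gamma>[of "Suc i"] on_C[of i] p_off_axis[of "Suc i"]
        q_off_axis[of i]]
      touch_next[of i] p_off_axis[of "Suc i"] q_off_axis[of i]
    by (simp add: k_def u_def)
  moreover have "k i \<noteq> k (Suc i)" for i
    using normal_conic_slope_inj[OF on_\<Gamma> on_\<Gamma> p_off_axis p_off_axis] \<open>p i \<noteq> p (Suc i)\<close>
    unfolding k_def by blast
  moreover have "u i \<noteq> u (Suc i)" for i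
    using normal_conic_slope_inj[OF on_C on_C q_off_axis q_off_axis] \<open>q i \<noteq> q (Suc i)\<close>
    unfolding u_def by blast
  moreover have "k (i + m) = k i" for i
    using \<open>p (i + m) = p i\<close> by (simp add: k_def)
  ultimately show False
    using slope_chain_not_periodic[OF \<open>a \<noteq> 0\<close>] \<open>m > 0\<close> by blast
qed

lemma no_closed_polygon_in_osculating_frame:
  assumes frame: "frame_det e1 e2 \<noteq> 0" and "a \<noteq> 0" "F \<noteq> 0"
    and \<Gamma>_frame: "conic_pullback \<Gamma> P e1 e2 = (a, b, c, 0, 1, 0)"
    and C_frame: "conic_pullback C P e1 e2 = (F * a, F * b', F * c', 0, F, 0)"
    and polygon: "inscribed_circumscribed \<Gamma> C A" and "conic_det C \<noteq> 0"
    and "m > 0" "\<And>i. A (i + m) = A i"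
  shows False
proof -
  obtain X where "\<And>i. X i \<in> conic_points C"
    and touch: "\<And>i. conic_grad C (X i) \<bullet> (A i - X i) = 0"
    and touch_next: "\<And>i. conic_grad C (X i) \<bullet> (A (Suc i) - X i) = 0"
    and "\<And>i. X i \<noteq> X (Suc i)"
    using inscribed_circumscribed_touching_points[OF polygon \<open>conic_det C \<noteq> 0\<close>] by blast
  define p where "p i = frame_coords e1 e2 (A i - P)" for i
  define q where "q i = frame_coords e1 e2 (X i - P)" for i
  have "A i \<in> conic_points \<Gamma>" "A i \<noteq> A (Suc i)" for i
    using polygon by (simp_all add: inscribed_circumscribed_def)
  show False
  proof (rule no_closed_polygon_osculating_normal_form[OF \<open>a \<noteq> 0\<close>])
    show "conic_eval (a, b, c, 0, 1, 0) (p i) = 0" for i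
      using \<open>A i \<in> conic_points \<Gamma>\<close> conic_eval_pullback_frame_coords[OF frame, of \<Gamma> P "A i"]
      by (simp add: p_def \<Gamma>_frame conic_points_def)
    show "conic_eval (a, b', c', 0, 1, 0) (q i) = 0" for i
      using \<open>X i \<in> conic_points C\<close> conic_eval_pullback_frame_coords[OF frame, of C P "X i"] \<open>F \<noteq> 0\<close>
      by (simp add: q_def C_frame conic_eval_normal_form_scale conic_points_def)
    show "conic_grad (a, b', c', 0, 1, 0) (q i) \<bullet> (p i - q i) = 0" for i
      using touch[of i] conic_grad_pullback_frame_coords[OF frame, of C P "X i" "A i"] \<open>F \<noteq> 0\<close>
      by (simp add: p_def q_def C_frame conic_grad_normal_form_scale)
    show "conic_grad (a, b', c', 0, 1, 0) (q i) \<bullet> (p (Suc i) - q i) = 0" for i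
      using touch_next[of i] conic_grad_pullback_frame_coords[OF frame, of C P "X i" "A (Suc i)"]
        \<open>F \<noteq> 0\<close>
      by (simp add: p_def q_def C_frame conic_grad_normal_form_scale)
    show "p i \<noteq> p (Suc i)" for i
      using \<open>A i \<noteq> A (Suc i)\<close> frame_coords_inj[OF frame] by (simp add: p_def)
    show "q i \<noteq> q (Suc i)" for i
      using \<open>X i \<noteq> X (Suc i)\<close> frame_coords_inj[OF frame] by (simp add: q_def)
    show "p (i + m) = p i" for i
      using \<open>A (i + m) = A i\<close> by (simp add: p_def)
  qed (rule \<open>m > 0\<close>)
qed

theorem proposition2p13:
  fixes \<Gamma> C :: conic and P :: point
  assumes "regular_conic \<Gamma>" and "regular_conic C"
    and "conic_points \<Gamma> \<noteq> conic_points C"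
    and "P \<in> conic_points \<Gamma>" and "P \<in> conic_points C"
    and "intersection_order_ge3 \<Gamma> C P"
  shows "\<not> (\<exists>A. inscribed_circumscribed \<Gamma> C A \<and> closed_polygonal A)"
proof
  assume "\<exists>A. inscribed_circumscribed \<Gamma> C A \<and> closed_polygonal A"
  then obtain A m where polygon: "inscribed_circumscribed \<Gamma> C A"
    and "m > 0" "\<And>i. A (i + m) = A i"
    unfolding closed_polygonal_def by blast
  have "conic_det C \<noteq> 0"
    using assms(2) by (simp add: regular_conic_def)
  obtain e1 e2 a b c b' c' F where "frame_det e1 e2 \<noteq> 0" "a \<noteq> 0" "F \<noteq> 0"
    "conic_pullback \<Gamma> P e1 e2 = (a, b, c, 0, 1, 0)"
    "conic_pullback C P e1 e2 = (F * a, F * b', F * c', 0, F, 0)"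
    by (rule osculating_normal_form[OF assms(1,2,4-6)])
  then show False
    using polygon \<open>conic_det C \<noteq> 0\<close> \<open>m > 0\<close> \<open>\<And>i. A (i + m) = A i\<close>
    by (rule no_closed_polygon_in_osculating_frame)
qed

end
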